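(* For every integer $N\ge 5$ there exists $q_0(N)$ such that for all prime powers $q\ge q_0(N)$, $$f^{\mathrm{opt}}(N,q)=u\bigl(f^{\mathrm{opt}}(\cdot,q),N,q,k^*(N)\bigr).$$
   Context: Let $f(n,q)$ denote the smallest size of a set of lines of $\mathrm{PG}(n,q)$ (projective space over $\mathbb F_q$) such that every plane contains one of them; its values for small $n$ are $f(-1,q)=f(0,q)=f(1,q)=0$, $f(2,q)=1$, $f(3,q)=q^2+1$, $f(4,q)=q^4+2q^2+q+1$. For $n\ge1$ and a function $\phi$ defined on $\{-1,0,\dots,n-1\}$ with $\phi(-1)=0$, and $-1\le k\le\frac{n-1}{2}$, set $$u(\phi,n,q,k)=q^{2k+2}\phi(n-k-1)+\phi(k)+\Bigl(\sum_{i=0}^kq^i\Bigr)\Bigl(\sum_{j=k}^{n-2}q^j\Bigr).$$ Define $f^{\mathrm{opt}}(n,q)=f(n,q)$ for $-1\le n\le 4$, and recursively $f^{\mathrm{opt}}(n,q)=\min_{0\le k\le\frac{n-1}{2}}u(f^{\mathrm{opt}}(\cdot,q),n,q,k)$ for $n\ge5$. For a positive integer $n$, $k^*(n):=n-2^{\lfloor\log_2 n\rfloor}$ is the unique integer $0\le k\le\frac{n-1}{2}$ such that $n-k$ is a power of $2$. *)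

theory Defs
  imports Complex_Main "HOL-Number_Theory.Prime_Powers"
begin

definition f_small :: "int \<Rightarrow> nat \<Rightarrow> nat" where
  "f_small n q =
     (if n = 2 then 1
      else if n = 3 then q^2 + 1
      else if n = 4 then q^4 + 2*q^2 + q + 1
      else 0)"

definition u :: "(int \<Rightarrow> nat) \<Rightarrow> int \<Rightarrow> nat \<Rightarrow> int \<Rightarrow> nat" where
  "u \<phi> n q k =
     q ^ nat (2*k + 2) * \<phi> (n - k - 1) + \<phi> k
     + (\<Sum>i\<in>{0..k}. q ^ nat i) * (\<Sum>j\<in>{k..n-2}. q ^ nat j)"

text \<open>f^opt; the function argument passed to u is restricted to indices < n
  (u only evaluates it there when 0 <= k), which makes the recursion well-founded.\<close>
function fopt :: "int \<Rightarrow> nat \<Rightarrow> nat" where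
  "fopt n q =
     (if n \<le> 4 then f_small n q
      else Min ((\<lambda>k. u (\<lambda>m. if m < n then fopt m q else 0) n q k) ` {0..(n-1) div 2}))"
  by auto
termination
  by (relation "measure (\<lambda>(n, q). nat (n + 2))") auto

definition kstar :: "nat \<Rightarrow> nat" where
  "kstar n = n - 2 ^ nat \<lfloor>log 2 (real n)\<rfloor>"

end

theory Submission
  imports Defs
begin

(* Write fopt n = gauss2 n - saving n, where gauss2 n is the Gaussian binomial [n choose 2]_q.
   Since gauss2 satisfies the splitting identity
     gauss2 n = q^(2k+2) gauss2 (n-k-1) + gauss2 (k+1) + (sum_{i<=k} q^i) (sum_{j=k}^{n-2} q^j),
   minimising u over k is the same as maximising saving_split n k, and the choice k = 0 already
   gives saving n >= q^2 saving (n-1). By strong induction on n the maximum is attained at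
   k = kstar n: for any other k, expand saving (n-k-1) by its own optimal split and compare the
   two nested splits, using the monotonicity of saving and elementary estimates on gauss2.
   The argument works for every q >= 2. *)

lemma geometric_sum_ivl:
  fixes x :: "'a::comm_ring_1"
  assumes "k \<le> m"
  shows "(\<Sum>j\<in>{k..<m}. x ^ j) * (x - 1) = x ^ m - x ^ k"
  using assms by (induction m rule: dec_induct) (simp_all add: algebra_simps)

lemma power_double_Suc: "(x::'a::monoid_mult) ^ (2*k+2) = (x ^ Suc k) ^ 2"
proof -
  have "2*k+2 = Suc k * 2" by simp
  then show ?thesis by (simp only: power_mult)
qed

declare fopt.simps[simp del]

lemma fopt_le4: "int n \<le> 4 \<Longrightarrow> fopt (int n) q = f_small (int n) q"
  by (subst fopt.simps) simp

lemma fopt_ge5: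
  assumes "n \<ge> 5"
  shows "fopt (int n) q = Min ((\<lambda>k. u (\<lambda>m. fopt m q) (int n) q (int k)) ` {..(n-1) div 2})"
proof -
  have "(int n - 1) div 2 = int ((n-1) div 2)"
    using assms by (simp add: zdiv_int of_nat_diff)
  then have range: "{0..(int n - 1) div 2} = int ` {..(n-1) div 2}"
    by (simp add: atMost_atLeast0 image_int_atLeastAtMost)
  have restrict: "u (\<lambda>m. if m < int n then fopt m q else 0) (int n) q (int k)
      = u (\<lambda>m. fopt m q) (int n) q (int k)" if "k < n" for k
    using that unfolding u_def by simp
  show ?thesis
    using assms by (subst fopt.simps)
      (auto simp: range image_image restrict intro!: arg_cong[where f=Min] image_cong)
qed

lemma u_fopt_eq:
  assumes q: "q \<ge> 2" and kn: "k < n"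
  shows "real (u (\<lambda>m. fopt m q) (int n) q (int k)) =
    real q ^ (2*k+2) * fopt (int (n-k-1)) q + fopt (int k) q
    + (real q ^ (k+1) - 1) / (real q - 1) * ((real q ^ (n-1) - real q ^ k) / (real q - 1))"
proof -
  have q1: "real q - 1 \<noteq> 0" using q by simp
  have "{0..int k} = int ` {..<k+1}" and "{int k..int n - 2} = int ` {k..<n-1}"
    using kn by (auto simp: image_int_atLeastLessThan lessThan_atLeast0 intro!: image_eqI)
  then have "real (\<Sum>i\<in>{0..int k}. q ^ nat i) = (\<Sum>i\<in>{0..<k+1}. real q ^ i)"
    and "real (\<Sum>j\<in>{int k..int n - 2}. q ^ nat j) = (\<Sum>j\<in>{k..<n-1}. real q ^ j)"
    by (simp_all add: sum.reindex lessThan_atLeast0)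
  moreover have "(\<Sum>i\<in>{0..<k+1}. real q ^ i) = (real q ^ (k+1) - 1) / (real q - 1)"
    and "(\<Sum>j\<in>{k..<n-1}. real q ^ j) = (real q ^ (n-1) - real q ^ k) / (real q - 1)"
    using geometric_sum_ivl[of 0 "k+1" "real q"] geometric_sum_ivl[of k "n-1" "real q"] kn q1
    by (simp_all add: eq_divide_eq)
  moreover have "int n - int k - 1 = int (n-k-1)" and "nat (2 * int k + 2) = 2*k+2"
    using kn by simp_all
  ultimately show ?thesis
    unfolding u_def by simp
qed

definition gauss2 :: "nat \<Rightarrow> nat \<Rightarrow> real" where
  "gauss2 q n = (real q ^ n - 1) * (real q ^ n - real q) / (real q * (real q + 1) * (real q - 1) ^ 2)"

definition gauss2_incr :: "nat \<Rightarrow> nat \<Rightarrow> real" where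
  "gauss2_incr q k = real q ^ k * (real q ^ k - 1) / (real q * (real q - 1))"

lemma gauss2_Suc:
  assumes "q \<ge> 2"
  shows "gauss2 q (Suc k) = gauss2 q k + gauss2_incr q k"
proof -
  have "real q \<noteq> 0" "real q - 1 \<noteq> 0" "real q + 1 \<noteq> 0"
    using assms by auto
  then show ?thesis
    unfolding gauss2_def gauss2_incr_def
    by (simp add: divide_simps) (simp add: algebra_simps power2_eq_square)
qed

lemma gauss2_split:
  assumes q: "q \<ge> 2" and kn: "k < n"
  shows "gauss2 q n = real q ^ (2*k+2) * gauss2 q (n-k-1) + gauss2 q (k+1)
    + (real q ^ (k+1) - 1) / (real q - 1) * ((real q ^ (n-1) - real q ^ k) / (real q - 1))"
proof -
  define Q X Y where "Q = real q" and "X = real q ^ k" and "Y = real q ^ (n-k-1)"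
  have "n = Suc (k + (n-k-1))" and "n - 1 = k + (n-k-1)"
    using kn by simp_all
  then have "real q ^ n = Q * X * Y" and "real q ^ (n-1) = X * Y"
    unfolding Q_def X_def Y_def by (metis power_Suc power_add mult.assoc)+
  moreover have "real q ^ (k+1) = Q * X" and "real q ^ (2*k+2) = (Q * X)^2"
    unfolding Q_def X_def by (simp, simp only: power_double_Suc power_Suc)
  moreover have "Q \<noteq> 0" "Q - 1 \<noteq> 0" "Q + 1 \<noteq> 0"
    using q by (auto simp: Q_def)
  ultimately show ?thesis
    unfolding gauss2_def X_def[symmetric] Y_def[symmetric] unfolding Q_def[symmetric]
    by (simp add: divide_simps) (simp add: algebra_simps power2_eq_square)
qed

lemma gauss2_incr_nonneg: "q \<ge> 2 \<Longrightarrow> gauss2_incr q k \<ge> 0"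
  by (simp add: gauss2_incr_def)

lemma gauss2_small:
  assumes "q \<ge> 2"
  shows "gauss2 q 0 = 0" "gauss2 q 1 = 0" "gauss2 q 2 = 1" "gauss2 q 3 = real q^2 + real q + 1"
    "gauss2 q 4 = real q^4 + real q^3 + 2 * real q^2 + real q + 1"
proof -
  have "real q \<noteq> 0" "real q - 1 \<noteq> 0" "real q + 1 \<noteq> 0"
    using assms by auto
  then show "gauss2 q 0 = 0" "gauss2 q 1 = 0" "gauss2 q 2 = 1" "gauss2 q 3 = real q^2 + real q + 1"
    "gauss2 q 4 = real q^4 + real q^3 + 2 * real q^2 + real q + 1"
    unfolding gauss2_def by (simp_all add: divide_simps)
      (simp_all add: algebra_simps power2_eq_square power3_eq_cube power4_eq_xxxx)
qed

lemma gauss2_incr_small: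
  assumes "q \<ge> 2"
  shows "gauss2_incr q 0 = 0" "gauss2_incr q 1 = 1" "gauss2_incr q 2 = real q^2 + real q"
  using assms unfolding gauss2_incr_def by (simp_all add: divide_simps power2_eq_square algebra_simps)

lemma gauss2_Suc_add_incr_le:
  assumes q: "q \<ge> 2"
  shows "gauss2 q (Suc k) + real q ^ (2*k+2) * gauss2_incr q b \<le> gauss2_incr q (k+b+1)"
proof -
  define Q X Y where "Q = real q" and "X = real q ^ k" and "Y = real q ^ b"
  have Q: "Q \<ge> 2" and X: "X \<ge> 1" and Y: "Y \<ge> 1"
    using q by (simp_all add: Q_def X_def Y_def)
  have "real q ^ Suc k = Q * X" "real q ^ (k+b+1) = Q * X * Y" "real q ^ (2*k+2) = (Q * X)^2"
    unfolding Q_def X_def Y_def by (simp, simp add: power_add, simp only: power_double_Suc power_Suc)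
  moreover have "Q \<noteq> 0" "Q - 1 \<noteq> 0" "Q + 1 \<noteq> 0"
    using Q by auto
  ultimately have gap:
      "gauss2_incr q (k+b+1) - real q ^ (2*k+2) * gauss2_incr q b = (Q*X - 1) / (Q - 1) * (X * Y)"
    and lhs: "gauss2 q (Suc k) = (Q*X - 1) / (Q - 1) * ((X - 1) / ((Q + 1) * (Q - 1)))"
    unfolding gauss2_def gauss2_incr_def Y_def[symmetric] unfolding Q_def[symmetric]
    by (simp_all add: divide_simps) (simp_all add: algebra_simps power2_eq_square)
  have D: "1 \<le> (Q + 1) * (Q - 1)"
    using mult_mono[of 1 "Q + 1" 1 "Q - 1"] Q by simp
  have "(X - 1) / ((Q + 1) * (Q - 1)) \<le> X - 1"
    using mult_left_mono[OF D, of "X - 1"] D X by (simp add: divide_le_eq)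
  also have "\<dots> \<le> X * Y"
    using X Y by (smt (verit) mult_le_cancel_left1)
  finally have "gauss2 q (Suc k) \<le> (Q*X - 1) / (Q - 1) * (X * Y)"
    unfolding lhs using mult_mono[of 1 Q 1 X] Q X by (intro mult_left_mono) simp_all
  then show ?thesis
    using gap by linarith
qed

lemma shifted_incr_bound:
  fixes Q X Y Z :: real
  assumes Q: "Q \<ge> 2" and X: "X \<ge> 1" and Y: "Y \<ge> 1" and Z: "Z \<ge> Q"
  shows "(Q*X*Z - 1) * (X*Z - 1) / ((Q + 1) * (Q - 1) * (Q - 1)) \<le> Q*X*X*Z / (Q - 1) * (Y * (Z - 1))"
proof -
  have D: "3 \<le> (Q + 1) * (Q - 1)"
    using mult_mono[of 3 "Q + 1" 1 "Q - 1"] Q by simp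
  have XZ: "X * Z \<ge> 2"
    using mult_mono[of 1 X 2 Z] X Z Q by simp
  have "(Q*X*Z - 1) * (X*Z - 1) \<le> (Q*X*Z) * (X*Z)"
    using XZ Q by (intro mult_mono) (simp_all add: mult.assoc)
  then have "(Q*X*Z - 1) * (X*Z - 1) / ((Q + 1) * (Q - 1) * (Q - 1))
      \<le> (Q*X*Z) * (X*Z) / ((Q + 1) * (Q - 1) * (Q - 1))"
    using Q by (intro divide_right_mono) simp_all
  also have "\<dots> = Q*X*X*Z / (Q - 1) * (Z / ((Q + 1) * (Q - 1)))"
    using Q by (simp add: field_simps)
  also have "\<dots> \<le> Q*X*X*Z / (Q - 1) * (Y * (Z - 1))"
  proof (rule mult_left_mono)
    have "Z \<le> 3 * (Z - 1)"
      using Z Q by simp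
    also have "\<dots> \<le> ((Q + 1) * (Q - 1)) * (Y * (Z - 1))"
      using D Y Z Q by (intro mult_mono) simp_all
    finally show "Z / ((Q + 1) * (Q - 1)) \<le> Y * (Z - 1)"
      using D by (simp add: divide_le_eq mult.commute)
    show "0 \<le> Q*X*X*Z / (Q - 1)"
      using Q X Z by simp
  qed
  finally show ?thesis .
qed

lemma gauss2_Suc_add_incr_le_shift:
  assumes q: "q \<ge> 2" and d: "d \<ge> 1"
  shows "gauss2 q (Suc (k+d)) + real q ^ (2*(k+d)+2) * gauss2_incr q b
    \<le> real q ^ (2*k+2) * gauss2_incr q (b+d)"
proof -
  define Q X Y Z where "Q = real q" and "X = real q ^ k" and "Y = real q ^ b" and "Z = real q ^ d"
  have Q: "Q \<ge> 2" and X: "X \<ge> 1" and Y: "Y \<ge> 1" and Z: "Z \<ge> Q"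
    using q d by (simp_all add: Q_def X_def Y_def Z_def power_increasing[of 1 d, simplified])
  have Suc_kd: "real q ^ Suc (k+d) = Q * X * Z"
    unfolding Q_def X_def Z_def by (simp add: power_add)
  moreover have "real q ^ (2*(k+d)+2) = (Q * X * Z)^2"
    by (simp only: power_double_Suc Suc_kd)
  moreover have "real q ^ (b+d) = Y * Z" and "real q ^ (2*k+2) = (Q * X)^2"
    unfolding Q_def X_def Y_def Z_def by (simp add: power_add, simp only: power_double_Suc power_Suc)
  moreover have "Q \<noteq> 0" "Q - 1 \<noteq> 0" "Q + 1 \<noteq> 0"
    using Q by auto
  ultimately have "real q ^ (2*k+2) * gauss2_incr q (b+d) - real q ^ (2*(k+d)+2) * gauss2_incr q b
      = Q * X * X * Z / (Q - 1) * (Y * (Z - 1))"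
    and "gauss2 q (Suc (k+d)) = (Q*X*Z - 1) * (X*Z - 1) / ((Q + 1) * (Q - 1) * (Q - 1))"
    unfolding gauss2_def gauss2_incr_def Y_def[symmetric] unfolding Q_def[symmetric]
    by (simp_all add: divide_simps) (simp_all add: algebra_simps power2_eq_square)
  then show ?thesis
    using shifted_incr_bound[OF Q X Y Z] by linarith
qed

definition saving :: "nat \<Rightarrow> nat \<Rightarrow> real" where
  "saving q n = gauss2 q n - fopt (int n) q"

definition saving_split :: "nat \<Rightarrow> nat \<Rightarrow> nat \<Rightarrow> real" where
  "saving_split q n k = real q ^ (2*k+2) * saving q (n-k-1) + saving q k + gauss2_incr q k"

lemma u_fopt_eq_saving_split:
  assumes q: "q \<ge> 2" and kn: "k < n"
  shows "real (u (\<lambda>m. fopt m q) (int n) q (int k)) = gauss2 q n - saving_split q n k"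
  unfolding u_fopt_eq[OF assms] gauss2_split[OF assms] saving_split_def saving_def
    gauss2_Suc[OF q, unfolded Suc_eq_plus1]
  by (simp add: algebra_simps)

lemma saving_split_le_saving:
  assumes q: "q \<ge> 2" and n: "n \<ge> 5" and k: "k \<le> (n-1) div 2"
  shows "saving_split q n k \<le> saving q n"
proof -
  have "fopt (int n) q \<le> u (\<lambda>m. fopt m q) (int n) q (int k)"
    unfolding fopt_ge5[OF n] using k by (intro Min_le) auto
  then have "real (fopt (int n) q) \<le> gauss2 q n - saving_split q n k"
    using u_fopt_eq_saving_split[OF q, of k n] k n by fastforce
  then show ?thesis
    by (simp add: saving_def)
qed

lemma saving_attained:
  assumes q: "q \<ge> 2" and n: "n \<ge> 5"
  obtains k where "k \<le> (n-1) div 2" and "saving q n = saving_split q n k"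
proof -
  have "fopt (int n) q \<in> (\<lambda>k. u (\<lambda>m. fopt m q) (int n) q (int k)) ` {..(n-1) div 2}"
    unfolding fopt_ge5[OF n] by (intro Min_in) auto
  then obtain k where k: "k \<le> (n-1) div 2" and "fopt (int n) q = u (\<lambda>m. fopt m q) (int n) q (int k)"
    by auto
  then have "saving q n = saving_split q n k"
    using u_fopt_eq_saving_split[OF q, of k n] n by (simp add: saving_def)
  with k that show ?thesis by blast
qed

lemma saving_small:
  assumes "q \<ge> 2"
  shows "saving q 0 = 0" "saving q 1 = 0" "saving q 2 = 0" "saving q 3 = real q" "saving q 4 = real q ^ 3"
  using gauss2_small[OF assms] fopt_le4[of 0 q] fopt_le4[of 1 q] fopt_le4[of 2 q]
    fopt_le4[of 3 q] fopt_le4[of 4 q]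
  by (simp_all add: saving_def f_small_def)

lemma saving_Suc_ge:
  assumes q: "q \<ge> 2"
  shows "real q ^ 2 * saving q n \<le> saving q (Suc n)"
proof (cases "Suc n \<ge> 5")
  case True
  then show ?thesis
    using saving_split_le_saving[OF q True, of 0]
    by (simp add: saving_split_def saving_small[OF q] gauss2_incr_small[OF q] power2_eq_square)
next
  case False
  then consider "n = 0" | "n = 1" | "n = 2" | "n = 3"
    by linarith
  then show ?thesis
    by cases (simp_all add: saving_small[OF q] power2_eq_square power3_eq_cube flip: One_nat_def)
qed

lemma saving_mono_pow:
  assumes q: "q \<ge> 2" and "j \<le> n"
  shows "real q ^ (2*(n-j)) * saving q j \<le> saving q n"
  using \<open>j \<le> n\<close>
proof (induction n rule: dec_induct)
  case base
  then show ?case by simp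
next
  case (step n)
  have "2 * (Suc n - j) = 2 + 2 * (n - j)"
    using step.hyps by simp
  then have "real q ^ (2*(Suc n - j)) * saving q j = real q ^ 2 * (real q ^ (2*(n-j)) * saving q j)"
    by (simp add: power_add power2_eq_square)
  also have "\<dots> \<le> real q ^ 2 * saving q n"
    using step.IH by (simp add: mult_left_mono)
  also have "\<dots> \<le> saving q (Suc n)"
    by (rule saving_Suc_ge[OF q])
  finally show ?case .
qed

lemma saving_nonneg: "q \<ge> 2 \<Longrightarrow> saving q n \<ge> 0"
  using saving_mono_pow[of q 0 n] saving_small by fastforce

lemma saving_add_incr_le: "q \<ge> 2 \<Longrightarrow> saving q k + gauss2_incr q k \<le> gauss2 q (Suc k)"
  by (simp add: saving_def gauss2_Suc)

definition saving_tail :: "nat \<Rightarrow> nat \<Rightarrow> nat \<Rightarrow> real" where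
  "saving_tail q k j = real q ^ (2*k+2) * (saving q j + gauss2_incr q j) + saving q k + gauss2_incr q k"

lemma saving_split_nested:
  assumes "saving q (n-k-1) = saving_split q (n-k-1) j"
  shows "saving_split q n k = real q ^ (2*(k+j+1)+2) * saving q (n-k-j-2) + saving_tail q k j"
  using assms unfolding saving_split_def saving_tail_def
  by (simp add: algebra_simps power_add)

lemma saving_tail_le:
  assumes q: "q \<ge> 2"
  shows "saving_tail q k j \<le> saving q (k+j+1) + gauss2_incr q (k+j+1)"
proof -
  have "real q ^ (2*k+2) * saving q j \<le> saving q (k+j+1)"
    using saving_mono_pow[OF q, of j "k+j+1"] by (simp add: add.commute)
  moreover have "saving q k + gauss2_incr q k \<le> gauss2 q (Suc k)"
    by (rule saving_add_incr_le[OF q])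
  ultimately show ?thesis
    using gauss2_Suc_add_incr_le[OF q, of k j] unfolding saving_tail_def by (simp add: algebra_simps)
qed

lemma saving_tail_le_shift:
  assumes q: "q \<ge> 2" and d: "d \<ge> 1"
  shows "saving_tail q (k+d) j \<le> saving_tail q k (j+d)"
proof -
  have "real q ^ (2*(k+d)+2) * saving q j = real q ^ (2*k+2) * (real q ^ (2*d) * saving q j)"
    by (simp add: algebra_simps flip: power_add)
  also have "\<dots> \<le> real q ^ (2*k+2) * saving q (j+d)"
    using saving_mono_pow[OF q, of j "j+d"] by (simp add: mult_left_mono)
  finally have "real q ^ (2*(k+d)+2) * saving q j \<le> real q ^ (2*k+2) * saving q (j+d)" .
  moreover have "saving q (k+d) + gauss2_incr q (k+d) \<le> gauss2 q (Suc (k+d))"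
    by (rule saving_add_incr_le[OF q])
  moreover have "0 \<le> saving q k + gauss2_incr q k"
    using saving_nonneg[OF q] gauss2_incr_nonneg[OF q] by (simp add: add_nonneg_nonneg)
  ultimately show ?thesis
    using gauss2_Suc_add_incr_le_shift[OF q d, of k j] unfolding saving_tail_def
    by (simp add: algebra_simps)
qed

lemma kstar_eqI:
  assumes "2^m \<le> n" and "n < 2^(m+1)"
  shows "kstar n = n - 2^m"
  using floor_log_nat_eq_if[of 2 m n] assms by (simp add: kstar_def)

lemma kstar_le_half:
  assumes "n \<ge> 1"
  shows "kstar n \<le> (n-1) div 2"
proof -
  obtain m where "2^m \<le> n" "n < 2^(m+1)"
    using ex_power_ivl1[of 2 n] assms by auto
  then show ?thesis
    using kstar_eqI[of m n] by simp
qed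

lemma saving_split_le_kstar_left:
  assumes q: "q \<ge> 2" and m: "2^m \<le> n" "n < 2^(m+1)" "m \<ge> 2" and k: "k < n - 2^m"
    and IH: "\<And>a. 4 \<le> a \<Longrightarrow> a < n \<Longrightarrow> saving q a = saving_split q a (kstar a)"
  shows "saving_split q n k \<le> saving_split q n (n - 2^m)"
proof -
  define K j where "K = n - 2^m" and "j = n - k - 1 - 2^m"
  have "(2::nat)^m \<ge> 2^2"
    using m by (intro power_increasing) simp_all
  moreover have "kstar (n-k-1) = j"
    using kstar_eqI[of m "n-k-1"] k m j_def by simp
  ultimately have "saving q (n-k-1) = saving_split q (n-k-1) j"
    using IH[of "n-k-1"] k by simp
  moreover have kj: "k + j + 1 = K" and "n - k - j - 2 = 2^m - 1"
    using k K_def j_def by simp_all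
  ultimately have "saving_split q n k = real q ^ (2*K+2) * saving q (2^m-1) + saving_tail q k j"
    using saving_split_nested[of q n k j] by simp
  also have "\<dots> \<le> real q ^ (2*K+2) * saving q (2^m-1) + saving q K + gauss2_incr q K"
    using saving_tail_le[OF q, of k j] unfolding kj by simp
  also have "\<dots> = saving_split q n K"
    using m K_def by (simp add: saving_split_def)
  finally show ?thesis
    unfolding K_def .
qed

lemma saving_split_le_kstar_right:
  assumes q: "q \<ge> 2" and m: "2^m \<le> n" "n < 2^(m+1)" "m \<ge> 3"
    and k: "n - 2^m < k" "2*k \<le> n - 1"
    and IH: "\<And>a. 4 \<le> a \<Longrightarrow> a < n \<Longrightarrow> saving q a = saving_split q a (kstar a)"
  shows "saving_split q n k \<le> saving_split q n (n - 2^m)"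
proof -
  define P :: nat where "P = 2^(m-1)"
  have P: "2^m = 2*P" "P \<ge> 4" "2^(m-1+1) = 2*P"
    using m power_increasing[of 2 "m-1" "2::nat"] by (simp_all add: P_def flip: power_Suc)
  define K j c d where "K = n - 2^m" and "j = n - k - 1 - P" and "c = P - 1" and "d = k - K"
  have ix: "n - k - j - 2 = c" "n - K - c - 2 = c" "k + j = K + c" "K + d = k" "j + d = c" "d \<ge> 1"
    using k m P unfolding j_def c_def d_def K_def by simp_all
  have "kstar (n-k-1) = j" and "kstar (n-K-1) = c"
    using kstar_eqI[of "m-1" "n-k-1", unfolded P_def[symmetric] P(3)]
      kstar_eqI[of "m-1" "n-K-1", unfolded P_def[symmetric] P(3)] k m P
    unfolding j_def c_def K_def by simp_all
  then have "saving q (n-k-1) = saving_split q (n-k-1) j"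
    and "saving q (n-K-1) = saving_split q (n-K-1) c"
    using IH[of "n-k-1"] IH[of "n-K-1"] k m P K_def by simp_all
  then have "saving_split q n k = real q ^ (2*(K+c+1)+2) * saving q c + saving_tail q k j"
    and "saving_split q n K = real q ^ (2*(K+c+1)+2) * saving q c + saving_tail q K c"
    using saving_split_nested[of q n k j] saving_split_nested[of q n K c] unfolding ix(1-3) by simp_all
  moreover have "saving_tail q k j \<le> saving_tail q K c"
    using saving_tail_le_shift[OF q ix(6), of K j] unfolding ix(4,5) .
  ultimately show ?thesis
    unfolding K_def by simp
qed

lemma saving_split_5:
  assumes q: "q \<ge> 2"
  shows "saving_split q 5 2 \<le> saving_split q 5 1"
proof -
  have "real q \<le> real q ^ 2"
    using power_increasing[of 1 2 "real q"] q by simp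
  moreover have "2 * real q ^ 2 \<le> real q ^ 3"
    using mult_right_mono[of 2 "real q" "real q ^ 2"] q by (simp add: power_Suc[symmetric])
  moreover have "real q ^ 3 \<le> real q ^ 5"
    using power_increasing[of 3 5 "real q"] q by simp
  moreover have "saving_split q 5 2 = real q ^ 2 + real q" and "saving_split q 5 1 = real q ^ 5 + 1"
    by (simp_all add: saving_split_def saving_small[OF q] gauss2_incr_small[OF q]
        flip: One_nat_def power_Suc2)
  ultimately show ?thesis
    by linarith
qed

lemma saving_split_le_kstar:
  assumes q: "q \<ge> 2" and n: "n \<ge> 5" and k: "k \<le> (n-1) div 2"
    and IH: "\<And>a. 4 \<le> a \<Longrightarrow> a < n \<Longrightarrow> saving q a = saving_split q a (kstar a)"
  shows "saving_split q n k \<le> saving_split q n (kstar n)"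
proof -
  obtain m where m: "2^m \<le> n" "n < 2^(m+1)"
    using ex_power_ivl1[of 2 n] n by auto
  have "m \<ge> 2"
    using power_less_imp_less_exp[of "2::nat" 2 "m+1"] m n by simp
  have "2*k \<le> n - 1"
    using k by presburger
  consider "k < n - 2^m" | "k = n - 2^m" | "n - 2^m < k" "m = 2" | "n - 2^m < k" "m \<ge> 3"
    using \<open>m \<ge> 2\<close> by linarith
  then show ?thesis
  proof cases
    case 3
    then have "n = 5 \<and> k = 2"
      using m n \<open>2*k \<le> n - 1\<close> by simp presburger
    then show ?thesis
      using saving_split_5[OF q] kstar_eqI[of 2 5] by simp
  qed (use saving_split_le_kstar_left[OF q m \<open>m \<ge> 2\<close> _ IH]
      saving_split_le_kstar_right[OF q m _ _ \<open>2*k \<le> n - 1\<close> IH] kstar_eqI[OF m] in auto)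
qed

lemma saving_eq_split_kstar:
  assumes q: "q \<ge> 2"
  shows "n \<ge> 4 \<Longrightarrow> saving q n = saving_split q n (kstar n)"
proof (induction n rule: less_induct)
  case (less n)
  show ?case
  proof (cases "n = 4")
    case True
    have "kstar 4 = 0"
      using kstar_eqI[of 2 4] by simp
    then show ?thesis
      using True by (simp add: saving_split_def saving_small[OF q] gauss2_incr_small[OF q]
          power2_eq_square power3_eq_cube)
  next
    case False
    with less.prems have n: "n \<ge> 5" by simp
    obtain k where "k \<le> (n-1) div 2" and "saving q n = saving_split q n k"
      using saving_attained[OF q n] .
    moreover have "saving_split q n k \<le> saving_split q n (kstar n)"
      using saving_split_le_kstar[OF q n] less.IH calculation by blast
    moreover have "saving_split q n (kstar n) \<le> saving q n"
      using saving_split_le_saving[OF q n] kstar_le_half[of n] n by simp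
    ultimately show ?thesis by linarith
  qed
qed

theorem proposition3p38:
  fixes N :: nat
  assumes "N \<ge> 5"
  shows "\<exists>q0::nat. \<forall>q::nat. primepow q \<and> q \<ge> q0 \<longrightarrow>
           fopt (int N) q = u (\<lambda>m. fopt m q) (int N) q (int (kstar N))"
proof (intro exI[of _ 2] allI impI)
  fix q :: nat
  assume "primepow q \<and> q \<ge> 2"
  then have q: "q \<ge> 2" by simp
  have "kstar N < N"
    using kstar_le_half[of N] assms by simp
  then have "real (u (\<lambda>m. fopt m q) (int N) q (int (kstar N))) = gauss2 q N - saving q N"
    using u_fopt_eq_saving_split[OF q] saving_eq_split_kstar[OF q] assms by simp
  then show "fopt (int N) q = u (\<lambda>m. fopt m q) (int N) q (int (kstar N))"
    by (simp add: saving_def)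
qed

end
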